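(* Let $p(t)=\sum_{k=0}^\infty a_kt^k$ with $0\le a_k<1$ for all $k$ and $\sum_k a_k=1$; let $p^{[1]}=p$, $p^{[n+1]}=p(p^{[n]})$ (composition of power series), and $q^{(n)}(t)=\frac1n\sum_{i=1}^np^{[i]}(t)=\sum_{i=0}^\infty q_i^{(n)}t^i$. Then $(q_0^{(n)})_{n\in\mathbb N}$ is monotone increasing and $\lim_{n\to\infty}q^{(n)}=0$, where $q^{(n)}=\sup\{q_i^{(n)}:i\ge1\}$.
   Context: "Monotone increasing" is meant non-strictly. *)

theory Defs
  imports "HOL-Analysis.Analysis" "HOL-Computational_Algebra.Formal_Power_Series"
begin

text \<open>Composition p(f) of real power series, where the inner series may have a nonzero
constant term: the coefficient of t^i is the (infinite) sum over k of p_k times the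
coefficient of t^i in f^k.  For series with nonnegative coefficients summing to 1
(probability generating functions) these sums converge.\<close>
definition pcomp :: "real fps \<Rightarrow> real fps \<Rightarrow> real fps" where
  "pcomp p f = Abs_fps (\<lambda>i. \<Sum>k. fps_nth p k * fps_nth (f ^ k) i)"

text \<open>Iterates: piter p n = p^[n] for n >= 1, with p^[1] = p and p^[n+1] = p(p^[n]).
The value at n = 0 is the identity series X (never used in the statement).\<close>
fun piter :: "real fps \<Rightarrow> nat \<Rightarrow> real fps" where
  "piter p 0 = fps_X"
| "piter p (Suc 0) = p"
| "piter p (Suc (Suc n)) = pcomp p (piter p (Suc n))"

definition qcoeff :: "real fps \<Rightarrow> nat \<Rightarrow> nat \<Rightarrow> real" where
  "qcoeff p n i = (1 / real n) * (\<Sum>j=1..n. fps_nth (piter p j) i)"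

end

theory Submission
  imports Defs "HOL-Real_Asymp.Real_Asymp"
begin

text \<open>Read p as the offspring distribution of a Galton-Watson process: p^[n] is the law of the
  size Z_n of generation n, and q^(n) is the Cesaro mean of these laws.  Conditioning on the size l
  of generation n gives p^[n+1]_i = sum_l p^[n]_l (p^l)_i; this needs p^[n+1] = p^[n](p), i.e.
  associativity of composition, which is checked on generating functions on [0, 1).
  Taking i = 0 shows that the extinction probabilities p^[n]_0 increase, hence so do their means.

  For the second claim it suffices that sup_{i >= 1} p^[n]_i tends to 0.  As (p^0)_i = 0 for i > 0,
  the identity above bounds p^[n+1]_i by the mass of p^[n] on {1, ..., K-1} plus sup_i (p^l)_i
  over l >= K.  Since p charges two points u <> v, splitting p = beta (X^u + X^v) + r shows that
  sup_i (p^l)_i is at most a binomial average of the central binomial probabilities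
  C(m, m div 2) / 2^m, which tend to 0.  Finally p^[n]_l tends to 0 for each fixed l >= 1: if
  p_0 > 0, its multiple p^[n]_l p_0^l is bounded by the increments of the convergent extinction
  probabilities; if p_0 = 0, the value p^[n](1/2) decays geometrically.\<close>

section \<open>Series with nonnegative coefficients\<close>

lemma sum_le_sums_nonneg:
  fixes f :: "nat \<Rightarrow> real"
  assumes "f sums s" "finite I" "\<And>n. 0 \<le> f n"
  shows "sum f I \<le> s"
  using sum_le_suminf[of f I] assms by (auto simp: sums_iff)

lemma sums_swap_nonneg:
  fixes w :: "nat \<Rightarrow> nat \<Rightarrow> real"
  assumes nonneg: "\<And>k i. 0 \<le> w k i"
    and rows: "\<And>k. (\<lambda>i. w k i) sums s k" and total: "s sums S"
  shows "(\<lambda>i. \<Sum>k. w k i) sums S" and "summable (\<lambda>k. w k i)"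
proof -
  have "0 \<le> s k" for k
    using rows[of k] nonneg by (metis sums_iff suminf_nonneg)
  then have "(s has_sum S) UNIV"
    by (rule sums_nonneg_imp_has_sum[OF total])
  moreover have "((\<lambda>i. w k i) has_sum s k) UNIV" for k
    using rows nonneg by (rule sums_nonneg_imp_has_sum)
  ultimately have joint: "((\<lambda>(k, i). w k i) has_sum S) (UNIV \<times> UNIV)"
    using nonneg by (intro has_sum_SigmaI[where g = s] summable_on_SigmaI[where g = s])
      (auto simp: has_sum_imp_summable)
  have swapped: "((\<lambda>(i, k). w k i) has_sum S) (UNIV \<times> UNIV)"
    using has_sum_swap[THEN iffD1, OF joint] by (simp add: case_prod_unfold)
  have "(\<lambda>k. w k i) summable_on UNIV" for i
    using summable_on_SigmaD1[of "\<lambda>i k. w k i", OF has_sum_imp_summable[OF swapped]] by simp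
  then have columns: "summable (\<lambda>k. w k i)" for i
    using summable_on_imp_summable by blast
  then show "summable (\<lambda>k. w k i)" .
  have "((\<lambda>k. w k i) has_sum (\<Sum>k. w k i)) UNIV" for i
    using summable_sums[OF columns] nonneg by (rule sums_nonneg_imp_has_sum)
  then have "((\<lambda>i. \<Sum>k. w k i) has_sum S) UNIV"
    using has_sum_Sigma'[where f = "\<lambda>(i, k). w k i", OF swapped] by simp
  then show "(\<lambda>i. \<Sum>k. w k i) sums S"
    by (rule has_sum_imp_sums)
qed

definition fps_mass :: "real fps \<Rightarrow> real \<Rightarrow> bool" where
  "fps_mass f s \<longleftrightarrow> (\<forall>n. 0 \<le> fps_nth f n) \<and> (\<lambda>n. fps_nth f n) sums s"

lemma fps_mass_nonneg: "fps_mass f s \<Longrightarrow> 0 \<le> fps_nth f n"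
  unfolding fps_mass_def by auto

lemma fps_mass_sums: "fps_mass f s \<Longrightarrow> (\<lambda>n. fps_nth f n) sums s"
  unfolding fps_mass_def by auto

lemma fps_mass_summable: "fps_mass f s \<Longrightarrow> summable (\<lambda>n. fps_nth f n)"
  unfolding fps_mass_def by (auto simp: sums_iff)

lemma fps_mass_nth_le: "fps_mass f s \<Longrightarrow> fps_nth f n \<le> s"
  using sum_le_sums_nonneg[of "fps_nth f" s "{n}"] by (auto simp: fps_mass_def)

lemma fps_mass_one: "fps_mass 1 1"
  using sums_single[of 0 "\<lambda>_. 1::real"] by (simp add: fps_mass_def fps_one_nth if_distrib)

lemma fps_mass_mult:
  assumes f: "fps_mass f s" and g: "fps_mass g t"
  shows "fps_mass (f * g) (s * t)"
proof -
  have "summable (\<lambda>n. norm (fps_nth f n))" "summable (\<lambda>n. norm (fps_nth g n))"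
    using fps_mass_summable[OF f] fps_mass_summable[OF g]
    by (simp_all add: fps_mass_nonneg[OF f] fps_mass_nonneg[OF g])
  from Cauchy_product_sums[OF this]
  have "(\<lambda>n. fps_nth (f * g) n) sums ((\<Sum>n. fps_nth f n) * (\<Sum>n. fps_nth g n))"
    by (simp add: fps_mult_nth atLeast0AtMost)
  then show ?thesis
    using f g by (auto simp: fps_mass_def fps_mult_nth sums_iff intro!: sum_nonneg)
qed

lemma fps_mass_power: "fps_mass f s \<Longrightarrow> fps_mass (f ^ k) (s ^ k)"
  by (induction k) (auto simp: fps_mass_one fps_mass_mult)

lemma fps_nth_pcomp: "fps_nth (pcomp p g) i = (\<Sum>k. fps_nth p k * fps_nth (g ^ k) i)"
  by (simp add: pcomp_def)

lemma summable_pcomp_nth: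
  assumes p: "fps_mass p s" and g: "fps_mass g 1"
  shows "summable (\<lambda>k. fps_nth p k * fps_nth (g ^ k) i)"
proof (rule summable_comparison_test'[OF fps_mass_summable[OF p]])
  show "norm (fps_nth p k * fps_nth (g ^ k) i) \<le> fps_nth p k" for k
    using fps_mass_nonneg[OF p, of k] fps_mass_nonneg[OF fps_mass_power[OF g], of k i]
      fps_mass_nth_le[OF fps_mass_power[OF g], of k i]
    by (simp add: mult_left_le)
qed

lemma fps_mass_pcomp:
  assumes p: "fps_mass p s" and g: "fps_mass g 1"
  shows "fps_mass (pcomp p g) s"
proof -
  have nonneg: "0 \<le> fps_nth p k * fps_nth (g ^ k) i" for k i
    by (intro mult_nonneg_nonneg fps_mass_nonneg[OF p] fps_mass_nonneg[OF fps_mass_power[OF g]])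
  have rows: "(\<lambda>i. fps_nth p k * fps_nth (g ^ k) i) sums (fps_nth p k)" for k
    using sums_mult[OF fps_mass_sums[OF fps_mass_power[OF g, of k]]] by simp
  from sums_swap_nonneg(1)[OF nonneg rows fps_mass_sums[OF p]]
  have "(\<lambda>i. fps_nth (pcomp p g) i) sums s"
    by (simp add: fps_nth_pcomp)
  moreover have "0 \<le> fps_nth (pcomp p g) i" for i
    unfolding fps_nth_pcomp using sums_swap_nonneg(2)[OF nonneg rows fps_mass_sums[OF p]] nonneg
    by (rule suminf_nonneg)
  ultimately show ?thesis
    unfolding fps_mass_def by blast
qed

lemma sums_eval_fps_mass:
  assumes f: "fps_mass f s" and x: "0 \<le> x" "x \<le> 1"
  shows "(\<lambda>n. fps_nth f n * x ^ n) sums eval_fps f x"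
proof -
  have "norm (fps_nth f n * x ^ n) \<le> fps_nth f n" for n
    using x fps_mass_nonneg[OF f, of n] by (simp add: mult_left_le power_le_one)
  then have "summable (\<lambda>n. fps_nth f n * x ^ n)"
    by (rule summable_comparison_test'[OF fps_mass_summable[OF f]])
  then show ?thesis
    unfolding eval_fps_def by (rule summable_sums)
qed

lemma eval_fps_mass_nonneg:
  assumes f: "fps_mass f s" and x: "0 \<le> x" "x \<le> 1"
  shows "0 \<le> eval_fps f x"
  using sums_le[OF _ sums_zero sums_eval_fps_mass[OF f x]] x by (simp add: fps_mass_nonneg[OF f])

lemma eval_fps_mass_le:
  assumes f: "fps_mass f s" and x: "0 \<le> x" "x \<le> 1"
  shows "eval_fps f x \<le> s"
proof (rule sums_le[OF _ sums_eval_fps_mass[OF f x] fps_mass_sums[OF f]])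
  show "fps_nth f n * x ^ n \<le> fps_nth f n" for n
    using x fps_mass_nonneg[OF f, of n] by (simp add: mult_left_le power_le_one)
qed

lemma eval_fps_mass_mult:
  assumes f: "fps_mass f s" and g: "fps_mass g t" and x: "0 \<le> x" "x \<le> 1"
  shows "eval_fps (f * g) x = eval_fps f x * eval_fps g x"
proof -
  have "summable (\<lambda>n. norm (fps_nth f n * x ^ n))" "summable (\<lambda>n. norm (fps_nth g n * x ^ n))"
    using sums_eval_fps_mass[OF f x] sums_eval_fps_mass[OF g x] x
    by (auto simp: sums_iff fps_mass_nonneg[OF f] fps_mass_nonneg[OF g])
  from Cauchy_product[OF this]
  have "eval_fps f x * eval_fps g x =
      (\<Sum>n. \<Sum>i\<le>n. fps_nth f i * x ^ i * (fps_nth g (n - i) * x ^ (n - i)))"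
    unfolding eval_fps_def .
  also have "\<dots> = eval_fps (f * g) x"
    unfolding eval_fps_def fps_mult_nth atLeast0AtMost sum_distrib_right
    by (intro suminf_cong sum.cong refl) (simp add: power_add [symmetric])
  finally show ?thesis ..
qed

lemma eval_fps_mass_power:
  assumes f: "fps_mass f s" and x: "0 \<le> x" "x \<le> 1"
  shows "eval_fps (f ^ k) x = eval_fps f x ^ k"
  by (induction k) (simp_all add: eval_fps_mass_mult[OF f fps_mass_power[OF f] x])

lemma eval_fps_pcomp:
  assumes p: "fps_mass p s" and g: "fps_mass g 1" and x: "0 \<le> x" "x \<le> 1"
  shows "eval_fps (pcomp p g) x = eval_fps p (eval_fps g x)"
proof -
  define w where "w k i = fps_nth p k * fps_nth (g ^ k) i * x ^ i" for k i
  have nonneg: "0 \<le> w k i" for k i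
    unfolding w_def using x
    by (intro mult_nonneg_nonneg fps_mass_nonneg[OF p] fps_mass_nonneg[OF fps_mass_power[OF g]])
      auto
  have rows: "(\<lambda>i. w k i) sums (fps_nth p k * eval_fps g x ^ k)" for k
    using sums_mult[OF sums_eval_fps_mass[OF fps_mass_power[OF g] x], of "fps_nth p k"]
    by (simp add: w_def eval_fps_mass_power[OF g x] mult.assoc)
  have total: "(\<lambda>k. fps_nth p k * eval_fps g x ^ k) sums eval_fps p (eval_fps g x)"
    using eval_fps_mass_nonneg[OF g x] eval_fps_mass_le[OF g x] by (intro sums_eval_fps_mass[OF p])
  have "(\<lambda>i. \<Sum>k. w k i) = (\<lambda>i. fps_nth (pcomp p g) i * x ^ i)"
    unfolding w_def fps_nth_pcomp
    by (intro ext suminf_mult2[symmetric, OF summable_pcomp_nth[OF p g]])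
  with sums_swap_nonneg(1)[OF nonneg rows total]
  have "(\<lambda>i. fps_nth (pcomp p g) i * x ^ i) sums eval_fps p (eval_fps g x)"
    by simp
  then show ?thesis
    unfolding eval_fps_def[of "pcomp p g"] by (simp add: sums_iff)
qed

lemma powser_coeffs_zero_if_vanishes_right_of_0:
  fixes d :: "nat \<Rightarrow> real"
  assumes summable: "summable (\<lambda>n. norm (d n))"
    and vanishes: "\<And>x. 0 < x \<Longrightarrow> x < 1 \<Longrightarrow> (\<lambda>n. d n * x ^ n) sums 0"
  shows "d n = 0"
proof (induction n rule: less_induct)
  case (less n)
  define F where "F x = (\<Sum>i. d (i + n) * x ^ i)" for x :: real
  have shifted_summable: "summable (\<lambda>i. d (i + n) * x ^ i)" if "norm x < 1" for x :: real
  proof (rule summable_comparison_test'[OF summable_ignore_initial_segment[OF summable, of n]])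
    fix i
    have "\<bar>x\<bar> ^ i \<le> 1"
      using that by (simp add: power_le_one)
    then show "norm (d (i + n) * x ^ i) \<le> norm (d (i + n))"
      by (simp add: abs_mult power_abs mult_left_le)
  qed
  then have "(F \<longlongrightarrow> d n) (at 0)"
    using powser_limit_0[of 1 "\<lambda>i. d (i + n)" F] by (simp add: F_def summable_sums)
  then have F_lim: "(F \<longlongrightarrow> d n) (at_right 0)"
    by (rule tendsto_within_subset) simp
  have F_zero: "F x = 0" if x: "0 < x" "x < 1" for x
  proof -
    have "(\<lambda>i. d (i + n) * x ^ (i + n)) sums 0"
      using sums_split_initial_segment[OF vanishes[OF x], of n] less by simp
    then have "(\<lambda>i. d (i + n) * x ^ i * x ^ n) sums 0"
      by (simp add: power_add mult.assoc)
    moreover have "(\<lambda>i. d (i + n) * x ^ i * x ^ n) sums (F x * x ^ n)"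
      unfolding F_def using x by (intro sums_mult2 summable_sums shifted_summable) simp
    ultimately have "F x * x ^ n = 0"
      by (simp add: sums_iff)
    then show ?thesis using x by simp
  qed
  have "eventually (\<lambda>x. x \<in> {0<..<1}) (at_right (0::real))"
    by (rule eventually_at_right_real) simp
  then have "eventually (\<lambda>x. F x = 0) (at_right 0)"
    by (rule eventually_mono) (simp add: F_zero)
  from Lim_transform_eventually[OF F_lim this] show "d n = 0"
    by (rule tendsto_unique[OF _ _ tendsto_const, rotated]) simp
qed

lemma fps_mass_eqI:
  assumes f: "fps_mass f s" and g: "fps_mass g t"
    and eval_eq: "\<And>x. 0 \<le> x \<Longrightarrow> x < 1 \<Longrightarrow> eval_fps f x = eval_fps g x"
  shows "f = g"
proof (rule fps_ext)
  fix n
  have "summable (\<lambda>n. norm (fps_nth f n - fps_nth g n))"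
  proof (rule summable_comparison_test'[OF summable_add[OF fps_mass_summable[OF f]
          fps_mass_summable[OF g]]])
    show "norm (norm (fps_nth f n - fps_nth g n)) \<le> fps_nth f n + fps_nth g n" for n
      using fps_mass_nonneg[OF f, of n] fps_mass_nonneg[OF g, of n] by (simp split: abs_split)
  qed
  moreover have "(\<lambda>n. (fps_nth f n - fps_nth g n) * x ^ n) sums 0" if "0 < x" "x < 1" for x
    using sums_diff[OF sums_eval_fps_mass[OF f, of x] sums_eval_fps_mass[OF g, of x]] eval_eq[of x] that
    by (simp add: left_diff_distrib)
  ultimately have "fps_nth f n - fps_nth g n = 0"
    by (rule powser_coeffs_zero_if_vanishes_right_of_0)
  then show "fps_nth f n = fps_nth g n"
    by simp
qed

lemma pcomp_assoc:
  assumes a: "fps_mass a s" and b: "fps_mass b 1" and c: "fps_mass c 1"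
  shows "pcomp (pcomp a b) c = pcomp a (pcomp b c)"
proof (rule fps_mass_eqI)
  show "fps_mass (pcomp (pcomp a b) c) s"
    by (rule fps_mass_pcomp[OF fps_mass_pcomp[OF a b] c])
  show "fps_mass (pcomp a (pcomp b c)) s"
    by (rule fps_mass_pcomp[OF a fps_mass_pcomp[OF b c]])
  fix x :: real
  assume "0 \<le> x" "x < 1"
  then have x: "0 \<le> x" "x \<le> 1" by simp_all
  have cx: "0 \<le> eval_fps c x" "eval_fps c x \<le> 1"
    using eval_fps_mass_nonneg[OF c x] eval_fps_mass_le[OF c x] by simp_all
  have "eval_fps (pcomp (pcomp a b) c) x = eval_fps (pcomp a b) (eval_fps c x)"
    by (rule eval_fps_pcomp[OF fps_mass_pcomp[OF a b] c x])
  also have "\<dots> = eval_fps a (eval_fps b (eval_fps c x))"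
    by (rule eval_fps_pcomp[OF a b cx])
  also have "\<dots> = eval_fps a (eval_fps (pcomp b c) x)"
    by (simp only: eval_fps_pcomp[OF b c x])
  also have "\<dots> = eval_fps (pcomp a (pcomp b c)) x"
    by (rule eval_fps_pcomp[OF a fps_mass_pcomp[OF b c] x, symmetric])
  finally show "eval_fps (pcomp (pcomp a b) c) x = eval_fps (pcomp a (pcomp b c)) x" .
qed

section \<open>The iterates and their pointwise decay\<close>

lemma fps_mass_piter:
  assumes p: "fps_mass p 1" and n: "0 < n"
  shows "fps_mass (piter p n) 1"
proof -
  obtain m where "n = Suc m"
    using n gr0_implies_Suc by blast
  moreover have "fps_mass (piter p (Suc m)) 1"
  proof (induction m)
    case 0
    then show ?case using p by simp
  next
    case (Suc m)
    then show ?case using fps_mass_pcomp[OF p] by simp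
  qed
  ultimately show ?thesis
    by simp
qed

lemma piter_Suc_Suc_right:
  assumes p: "fps_mass p 1"
  shows "piter p (Suc (Suc n)) = pcomp (piter p (Suc n)) p"
proof (induction n)
  case 0
  then show ?case by simp
next
  case (Suc n)
  have "piter p (Suc (Suc (Suc n))) = pcomp p (piter p (Suc (Suc n)))"
    by (rule piter.simps(3))
  also have "\<dots> = pcomp p (pcomp (piter p (Suc n)) p)"
    by (simp only: Suc.IH)
  also have "\<dots> = pcomp (pcomp p (piter p (Suc n))) p"
    by (rule pcomp_assoc[OF p fps_mass_piter[OF p] p, symmetric]) simp
  finally show ?case
    by simp
qed

lemma sums_piter_Suc_Suc_nth:
  assumes p: "fps_mass p 1"
  shows "(\<lambda>l. fps_nth (piter p (Suc n)) l * fps_nth (p ^ l) i) sums fps_nth (piter p (Suc (Suc n))) i"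
  unfolding piter_Suc_Suc_right[OF p] fps_nth_pcomp
  by (rule summable_sums[OF summable_pcomp_nth[OF fps_mass_piter[OF p] p]]) simp

lemma piter_nth_0_step:
  assumes p: "fps_mass p 1" and k: "k \<noteq> 0"
  shows "fps_nth (piter p (Suc n)) 0 + fps_nth (piter p (Suc n)) k * fps_nth p 0 ^ k
    \<le> fps_nth (piter p (Suc (Suc n))) 0"
proof -
  have "0 \<le> fps_nth (piter p (Suc n)) l * fps_nth (p ^ l) 0" for l
    using fps_mass_nonneg[OF fps_mass_piter[OF p]] fps_mass_nonneg[OF fps_mass_power[OF p]] by simp
  from sum_le_sums_nonneg[OF sums_piter_Suc_Suc_nth[OF p] _ this, of "{0, k}"]
  show ?thesis
    using k by (simp add: fps_nth_power_0)
qed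

lemma incseq_piter_nth_0:
  assumes p: "fps_mass p 1"
  shows "incseq (\<lambda>n. fps_nth (piter p (Suc n)) 0)"
proof (rule incseq_SucI)
  fix n
  have "0 \<le> fps_nth (piter p (Suc n)) 1 * fps_nth p 0"
    using fps_mass_nonneg[OF fps_mass_piter[OF p]] fps_mass_nonneg[OF p] by simp
  then show "fps_nth (piter p (Suc n)) 0 \<le> fps_nth (piter p (Suc (Suc n))) 0"
    using piter_nth_0_step[OF p, of 1 n] by simp
qed

lemma piter_nth_0_mono:
  assumes p: "fps_mass p 1" and "0 < m" "m \<le> n"
  shows "fps_nth (piter p m) 0 \<le> fps_nth (piter p n) 0"
proof -
  from assms(2,3) obtain m' n' where "m = Suc m'" "n = Suc n'"
    by (cases m; cases n) auto
  then show ?thesis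
    using incseqD[OF incseq_piter_nth_0[OF p], of m' n'] assms(3) by simp
qed

lemma piter_nth_tendsto_zeroI:
  assumes p: "fps_mass p 1"
    and le: "\<And>n. fps_nth (piter p (Suc n)) k \<le> b n" and b: "b \<longlonglongrightarrow> 0"
  shows "(\<lambda>n. fps_nth (piter p n) k) \<longlonglongrightarrow> 0"
proof -
  have "eventually (\<lambda>n. 0 \<le> fps_nth (piter p (Suc n)) k) sequentially"
    "eventually (\<lambda>n. fps_nth (piter p (Suc n)) k \<le> b n) sequentially"
    by (simp_all add: always_eventually le fps_mass_nonneg[OF fps_mass_piter[OF p]])
  from tendsto_sandwich[OF this tendsto_const b] show ?thesis
    by (rule LIMSEQ_imp_Suc)
qed

lemma piter_nth_tendsto_zero_if_nth_0_pos:
  assumes p: "fps_mass p 1" and p0: "0 < fps_nth p 0" and k: "k \<noteq> 0"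
  shows "(\<lambda>n. fps_nth (piter p n) k) \<longlonglongrightarrow> 0"
proof (rule piter_nth_tendsto_zeroI[OF p])
  define y where "y = (\<lambda>n. fps_nth (piter p (Suc n)) 0)"
  show "fps_nth (piter p (Suc n)) k \<le> (y (Suc n) - y n) / fps_nth p 0 ^ k" for n
    using piter_nth_0_step[OF p k, of n] p0 unfolding y_def by (simp add: pos_le_divide_eq)
  have "bdd_above (range y)"
    by (rule bdd_aboveI[of _ 1]) (auto simp: y_def intro: fps_mass_nth_le[OF fps_mass_piter[OF p]])
  then have y_lim: "y \<longlonglongrightarrow> (SUP n. y n)"
    using incseq_piter_nth_0[OF p] unfolding y_def by (rule LIMSEQ_incseq_SUP)
  have "(\<lambda>n. y (Suc n) - y n) \<longlonglongrightarrow> 0"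
    using tendsto_diff[OF LIMSEQ_Suc[OF y_lim] y_lim] by simp
  then show "(\<lambda>n. (y (Suc n) - y n) / fps_nth p 0 ^ k) \<longlonglongrightarrow> 0"
    by (rule tendsto_divide_zero)
qed

lemma fps_nth_mult_power_le_eval_fps:
  assumes f: "fps_mass f s" and x: "0 \<le> x" "x \<le> 1"
  shows "fps_nth f k * x ^ k \<le> eval_fps f x"
  using sum_le_sums_nonneg[OF sums_eval_fps_mass[OF f x], of "{k}"] x
  by (simp add: fps_mass_nonneg[OF f])

lemma eval_fps_le_if_nth_0_eq_0:
  assumes p: "fps_mass p 1" and p0: "fps_nth p 0 = 0" and y: "0 \<le> y" "y \<le> 1/2"
  shows "eval_fps p y \<le> (1 + fps_nth p 1) / 2 * y"
proof -
  define a where "a = fps_nth p 1"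
  have "fps_nth p k * y ^ k \<le> fps_nth p k * y\<^sup>2 + (if k = 1 then a * (y - y\<^sup>2) else 0)" for k
  proof (cases "k \<le> 1")
    case True
    then show ?thesis
      using p0 by (cases k) (auto simp: a_def algebra_simps)
  next
    case False
    then have "y ^ k \<le> y\<^sup>2"
      using y by (intro power_decreasing) auto
    then show ?thesis
      using False fps_mass_nonneg[OF p, of k] by (simp add: mult_left_mono)
  qed
  moreover have "(\<lambda>k. fps_nth p k * y\<^sup>2 + (if k = 1 then a * (y - y\<^sup>2) else 0))
      sums (1 * y\<^sup>2 + a * (y - y\<^sup>2))"
    by (intro sums_add sums_mult2 fps_mass_sums[OF p] sums_single)
  ultimately have "eval_fps p y \<le> y\<^sup>2 + a * (y - y\<^sup>2)"
    using sums_le[OF _ sums_eval_fps_mass[OF p]] y by fastforce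
  also have "\<dots> \<le> (1 + a) / 2 * y"
  proof -
    have "0 \<le> (1 - a) * y * (1/2 - y)"
      using y fps_mass_nth_le[OF p, of 1] by (simp add: a_def)
    moreover have "(1 + a) / 2 * y - (y\<^sup>2 + a * (y - y\<^sup>2)) = (1 - a) * y * (1/2 - y)"
      by (simp add: algebra_simps power2_eq_square)
    ultimately show ?thesis
      by linarith
  qed
  finally show ?thesis
    by (simp add: a_def)
qed

lemma eval_fps_piter_half_le:
  assumes p: "fps_mass p 1" and p0: "fps_nth p 0 = 0"
  shows "eval_fps (piter p (Suc n)) (1/2) \<le> ((1 + fps_nth p 1) / 2) ^ Suc n / 2"
proof (induction n)
  case 0
  then show ?case
    using eval_fps_le_if_nth_0_eq_0[OF p p0, of "1/2"] by simp
next
  case (Suc n)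
  define \<theta> where "\<theta> = (1 + fps_nth p 1) / 2"
  define x where "x = eval_fps (piter p (Suc n)) (1/2)"
  have \<theta>: "0 \<le> \<theta>" "\<theta> \<le> 1"
    using fps_mass_nonneg[OF p, of 1] fps_mass_nth_le[OF p, of 1] by (simp_all add: \<theta>_def)
  then have "\<theta> ^ Suc n \<le> 1"
    by (intro power_le_one) simp_all
  then have x: "0 \<le> x" "x \<le> 1/2"
    using Suc eval_fps_mass_nonneg[OF fps_mass_piter[OF p]] by (auto simp: x_def \<theta>_def)
  have "eval_fps (piter p (Suc (Suc n))) (1/2) = eval_fps p x"
    unfolding piter.simps(3) x_def by (rule eval_fps_pcomp[OF p fps_mass_piter[OF p]]) auto
  also have "\<dots> \<le> \<theta> * x"
    unfolding \<theta>_def by (rule eval_fps_le_if_nth_0_eq_0[OF p p0 x])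
  also have "\<dots> \<le> \<theta> * (\<theta> ^ Suc n / 2)"
    using Suc.IH unfolding x_def \<theta>_def by (rule mult_left_mono) (use \<theta> in \<open>simp add: \<theta>_def\<close>)
  finally show ?case
    by (simp add: \<theta>_def)
qed

lemma piter_nth_tendsto_zero_if_nth_0_eq_0:
  assumes p: "fps_mass p 1" and p0: "fps_nth p 0 = 0" and p1: "fps_nth p 1 < 1"
  shows "(\<lambda>n. fps_nth (piter p n) k) \<longlonglongrightarrow> 0"
proof (rule piter_nth_tendsto_zeroI[OF p])
  define \<theta> where "\<theta> = (1 + fps_nth p 1) / 2"
  show "fps_nth (piter p (Suc n)) k \<le> 2 ^ k * (\<theta> ^ Suc n / 2)" for n
  proof -
    have "fps_nth (piter p (Suc n)) k \<le> 2 ^ k * eval_fps (piter p (Suc n)) (1/2)"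
      using fps_nth_mult_power_le_eval_fps[OF fps_mass_piter[OF p], of "Suc n" "1/2" k]
      by (simp add: field_simps power_one_over)
    also have "\<dots> \<le> 2 ^ k * (\<theta> ^ Suc n / 2)"
      unfolding \<theta>_def by (rule mult_left_mono[OF eval_fps_piter_half_le[OF p p0]]) simp
    finally show ?thesis .
  qed
  have "(\<lambda>n. \<theta> ^ Suc n) \<longlonglongrightarrow> 0"
    using p1 fps_mass_nonneg[OF p, of 1] by (intro LIMSEQ_Suc LIMSEQ_power_zero) (simp_all add: \<theta>_def)
  then show "(\<lambda>n. 2 ^ k * (\<theta> ^ Suc n / 2)) \<longlonglongrightarrow> 0"
    by (intro tendsto_mult_right_zero tendsto_divide_zero)
qed

lemma piter_nth_tendsto_zero:
  assumes p: "fps_mass p 1" and p1: "fps_nth p 1 < 1" and k: "k \<noteq> 0"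
  shows "(\<lambda>n. fps_nth (piter p n) k) \<longlonglongrightarrow> 0"
proof (cases "fps_nth p 0 = 0")
  case True
  then show ?thesis
    using piter_nth_tendsto_zero_if_nth_0_eq_0[OF p _ p1] by blast
next
  case False
  then show ?thesis
    using piter_nth_tendsto_zero_if_nth_0_pos[OF p _ k] fps_mass_nonneg[OF p, of 0] by simp
qed

section \<open>Anticoncentration of powers\<close>

lemma Suc_choose_le_twice_central_binomial: "Suc m choose k \<le> 2 * (m choose (m div 2))"
proof (cases k)
  case 0
  have "0 < m choose (m div 2)"
    by (rule zero_less_binomial) simp
  then show ?thesis
    using 0 by (simp add: Suc_le_eq)
next
  case (Suc k')
  then show ?thesis
    using binomial_maximum[of m k'] binomial_maximum[of m k] by simp
qed

lemma central_binomial_div_power_antimono: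
  assumes "m \<le> m'"
  shows "real (m' choose (m' div 2)) / 2 ^ m' \<le> real (m choose (m div 2)) / 2 ^ m"
  using assms
proof (induction m' rule: dec_induct)
  case (step n)
  have "real (Suc n choose (Suc n div 2)) \<le> 2 * real (n choose (n div 2))"
    using Suc_choose_le_twice_central_binomial[of n "Suc n div 2"] by linarith
  then have "real (Suc n choose (Suc n div 2)) / 2 ^ Suc n \<le> real (n choose (n div 2)) / 2 ^ n"
    by (simp add: field_simps)
  then show ?case
    using step.IH by linarith
qed simp

lemma Suc_mult_central_binomial_Suc:
  "Suc n * (2 * Suc n choose Suc n) = 2 * (2 * n + 1) * (2 * n choose n)"
proof -
  have "Suc n * (2 * Suc n choose Suc n) = Suc (Suc (2 * n)) * (Suc (2 * n) choose n)"
    using Suc_times_binomial[of n "Suc (2 * n)"] by simp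
  also have "Suc (2 * n) choose n = Suc (2 * n) choose Suc n"
    using binomial_symmetric[of n "Suc (2 * n)"] by (simp add: Suc_diff_le)
  also have "Suc (Suc (2 * n)) * \<dots> = 2 * (Suc n * (Suc (2 * n) choose Suc n))"
    by simp
  also have "Suc n * (Suc (2 * n) choose Suc n) = Suc (2 * n) * (2 * n choose n)"
    by (rule Suc_times_binomial)
  finally show ?thesis
    by simp
qed

lemma central_binomial_even_div_power_squared_le:
  "(real (2 * n choose n) / 4 ^ n)\<^sup>2 * (2 * n + 1) \<le> 1"
proof (induction n)
  case (Suc n)
  define a where "a = real (2 * Suc n choose Suc n)"
  define b where "b = real (2 * n choose n)"
  define X where "X = a / 4 ^ Suc n"
  define Y where "Y = b / 4 ^ n"
  have "real (Suc n * (2 * Suc n choose Suc n)) = real (2 * (2 * n + 1) * (2 * n choose n))"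
    by (simp only: Suc_mult_central_binomial_Suc)
  then have ab: "(1 + real n) * a = 2 * (2 * real n + 1) * b"
    unfolding a_def b_def by (simp only: of_nat_mult of_nat_add of_nat_numeral of_nat_1 of_nat_Suc)
  have "(2 * real n + 2) * X = 2 * ((1 + real n) * a) / (4 * 4 ^ n)"
    by (simp add: X_def field_simps)
  also have "\<dots> = (2 * real n + 1) * Y"
    by (simp only: ab) (simp add: Y_def field_simps)
  finally have X: "X = (2 * real n + 1) * Y / (2 * real n + 2)"
    by (simp add: eq_divide_eq mult.commute)
  have "X\<^sup>2 * real (2 * Suc n + 1)
      = Y\<^sup>2 * (2 * real n + 1) * ((2 * real n + 1) * (2 * real n + 3) / (2 * real n + 2)\<^sup>2)"
    unfolding X by (simp add: field_simps power2_eq_square)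
  also have "\<dots> \<le> 1 * 1"
  proof (rule mult_mono)
    show "Y\<^sup>2 * (2 * real n + 1) \<le> 1"
      using Suc.IH by (simp add: Y_def b_def add.commute)
    have "(2 * real n + 1) * (2 * real n + 3) \<le> (2 * real n + 2)\<^sup>2"
      by (simp add: power2_eq_square algebra_simps)
    then show "(2 * real n + 1) * (2 * real n + 3) / (2 * real n + 2)\<^sup>2 \<le> 1"
      by simp
  qed simp_all
  finally have "X\<^sup>2 * real (2 * Suc n + 1) \<le> 1"
    by simp
  then show ?case
    unfolding X_def a_def .
qed simp

lemma central_binomial_div_power_squared_le:
  "(real (m choose (m div 2)) / 2 ^ m)\<^sup>2 * m \<le> 1"
proof -
  define n where "n = m div 2"
  have "real (m choose (m div 2)) / 2 ^ m \<le> real (2 * n choose n) / 4 ^ n"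
    using central_binomial_div_power_antimono[of "2 * n" m] by (simp add: n_def power_mult)
  then have "(real (m choose (m div 2)) / 2 ^ m)\<^sup>2 \<le> (real (2 * n choose n) / 4 ^ n)\<^sup>2"
    by (simp add: power_mono)
  moreover have "real m \<le> 2 * n + 1"
    by (simp add: n_def)
  ultimately have "(real (m choose (m div 2)) / 2 ^ m)\<^sup>2 * m
      \<le> (real (2 * n choose n) / 4 ^ n)\<^sup>2 * (2 * n + 1)"
    by (intro mult_mono) auto
  also have "\<dots> \<le> 1"
    by (rule central_binomial_even_div_power_squared_le)
  finally show ?thesis .
qed

lemma central_binomial_div_power_tendsto_zero:
  "(\<lambda>m. real (m choose (m div 2)) / 2 ^ m) \<longlonglongrightarrow> 0"
proof (rule tendsto_sandwich[OF _ _ tendsto_const])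
  show "eventually (\<lambda>m. 0 \<le> real (m choose (m div 2)) / 2 ^ m) sequentially"
    by simp
  have "real (m choose (m div 2)) / 2 ^ m \<le> 1 / sqrt m" if "0 < m" for m
  proof -
    have "(real (m choose (m div 2)) / 2 ^ m)\<^sup>2 \<le> (1 / sqrt m)\<^sup>2"
      using central_binomial_div_power_squared_le[of m] that by (simp add: field_simps)
    then show ?thesis
      by (rule power2_le_imp_le) simp
  qed
  then show "eventually (\<lambda>m. real (m choose (m div 2)) / 2 ^ m \<le> 1 / sqrt m) sequentially"
    by (rule eventually_mono[OF eventually_gt_at_top[of 0]])
  show "(\<lambda>m. 1 / sqrt (real m)) \<longlonglongrightarrow> 0"
    by real_asymp
qed

lemma binomial_term_tendsto_zero:
  fixes g :: real
  assumes g: "0 < g" "g \<le> 1"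
  shows "(\<lambda>l. real (l choose m) * g ^ m * (1 - g) ^ (l - m)) \<longlonglongrightarrow> 0"
proof (cases "g = 1")
  case True
  have "eventually (\<lambda>l. real (l choose m) * g ^ m * (1 - g) ^ (l - m) = 0) sequentially"
    using eventually_gt_at_top[of m] by (rule eventually_mono) (simp add: True)
  then show ?thesis
    by (rule tendsto_eventually)
next
  case False
  define q where "q = 1 - g"
  have q: "0 < q" "q < 1"
    using g False by (simp_all add: q_def)
  have "real (l choose m) * g ^ m * q ^ (l - m) \<le> real l ^ m * q ^ l / q ^ m" for l
  proof (cases "m \<le> l")
    case True
    have "real (l choose m) * g ^ m \<le> real l ^ m * 1"
      using binomial_le_pow[OF True] g by (intro mult_mono power_le_one) (simp_all flip: of_nat_power)
    then have "real (l choose m) * g ^ m * q ^ (l - m) \<le> real l ^ m * q ^ (l - m)"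
      using q by (simp add: mult_right_mono)
    also have "\<dots> = real l ^ m * q ^ l / q ^ m"
      using True q by (simp add: power_diff)
    finally show ?thesis .
  qed (use q in \<open>simp add: binomial_eq_0\<close>)
  then have upper: "eventually (\<lambda>l. real (l choose m) * g ^ m * q ^ (l - m)
      \<le> real l ^ m * q ^ l / q ^ m) sequentially"
    by (simp add: always_eventually)
  have lower: "eventually (\<lambda>l. 0 \<le> real (l choose m) * g ^ m * q ^ (l - m)) sequentially"
    using g q by (simp add: always_eventually)
  have "(\<lambda>l. real l ^ m * q ^ l) \<longlonglongrightarrow> 0"
    using q by real_asymp
  then have "(\<lambda>l. real l ^ m * q ^ l / q ^ m) \<longlonglongrightarrow> 0"
    by (rule tendsto_divide_zero)
  from tendsto_sandwich[OF lower upper tendsto_const this] show ?thesis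
    by (simp add: q_def)
qed

lemma sum_mult_le_head_plus_tail:
  fixes t c :: "nat \<Rightarrow> real"
  assumes t: "\<And>m. 0 \<le> t m" "(\<Sum>m\<le>l. t m) \<le> 1"
    and c: "\<And>m. c m \<le> 1" "\<And>m. M \<le> m \<Longrightarrow> c m \<le> e" and e: "0 \<le> e"
  shows "(\<Sum>m\<le>l. t m * c m) \<le> (\<Sum>m<M. t m) + e"
proof -
  have "(\<Sum>m\<in>{..l} \<inter> {..<M}. t m * c m) \<le> (\<Sum>m\<in>{..l} \<inter> {..<M}. t m)"
    using t c by (intro sum_mono) (simp add: mult_left_le)
  also have "\<dots> \<le> (\<Sum>m<M. t m)"
    using t by (intro sum_mono2) auto
  finally have head: "(\<Sum>m\<in>{..l} \<inter> {..<M}. t m * c m) \<le> (\<Sum>m<M. t m)" .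
  have "(\<Sum>m\<in>{..l} - {..<M}. t m * c m) \<le> (\<Sum>m\<in>{..l} - {..<M}. t m) * e"
    unfolding sum_distrib_right using t c by (intro sum_mono mult_left_mono) auto
  also have "\<dots> \<le> (\<Sum>m\<le>l. t m) * e"
    using t e by (intro mult_right_mono sum_mono2) auto
  also have "\<dots> \<le> e"
    using t e by (intro mult_left_le_one_le sum_nonneg) auto
  finally have tail: "(\<Sum>m\<in>{..l} - {..<M}. t m * c m) \<le> e" .
  show ?thesis
    using sum.Int_Diff[of "{..l}" "\<lambda>m. t m * c m" "{..<M}"] head tail by simp
qed

lemma binomial_average_tendsto_zero:
  fixes g :: real and c :: "nat \<Rightarrow> real"
  assumes g: "0 < g" "g \<le> 1"
    and c: "c \<longlonglongrightarrow> 0" "\<And>m. 0 \<le> c m" "\<And>m. c m \<le> 1"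
  shows "(\<lambda>l. \<Sum>m\<le>l. real (l choose m) * g ^ m * (1 - g) ^ (l - m) * c m) \<longlonglongrightarrow> 0"
proof -
  define t where "t l m = real (l choose m) * g ^ m * (1 - g) ^ (l - m)" for l m
  have t_nonneg: "0 \<le> t l m" for l m
    using g by (simp add: t_def)
  have t_sum: "(\<Sum>m\<le>l. t l m) = 1" for l
    using binomial_ring[of g "1 - g" l] by (simp add: t_def mult_ac)
  have "(\<lambda>l. \<Sum>m\<le>l. t l m * c m) \<longlonglongrightarrow> 0"
  proof (rule order_tendstoI)
    fix a :: real
    assume "a < 0"
    moreover have "0 \<le> (\<Sum>m\<le>l. t l m * c m)" for l
      using t_nonneg c(2) by (intro sum_nonneg mult_nonneg_nonneg)
    ultimately show "eventually (\<lambda>l. a < (\<Sum>m\<le>l. t l m * c m)) sequentially"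
      by (intro always_eventually allI less_le_trans[OF \<open>a < 0\<close>])
  next
    fix a :: real
    assume a: "0 < a"
    obtain M where M: "\<And>m. M \<le> m \<Longrightarrow> c m \<le> a / 2"
      using order_tendstoD(2)[OF c(1), of "a / 2"] a
      by (auto simp: eventually_sequentially intro: less_imp_le)
    have "(\<lambda>l. \<Sum>m<M. t l m) \<longlonglongrightarrow> 0"
      unfolding t_def by (intro tendsto_null_sum binomial_term_tendsto_zero[OF g])
    from order_tendstoD(2)[OF this, of "a / 2"]
    have "eventually (\<lambda>l. (\<Sum>m<M. t l m) < a / 2) sequentially"
      using a by simp
    then show "eventually (\<lambda>l. (\<Sum>m\<le>l. t l m * c m) < a) sequentially"
    proof (rule eventually_mono)
      fix l
      assume "(\<Sum>m<M. t l m) < a / 2"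
      moreover have "(\<Sum>m\<le>l. t l m * c m) \<le> (\<Sum>m<M. t l m) + a / 2"
        using t_nonneg t_sum c(3) M a by (intro sum_mult_le_head_plus_tail) auto
      ultimately show "(\<Sum>m\<le>l. t l m * c m) < a"
        by linarith
    qed
  qed
  then show ?thesis
    by (simp add: t_def)
qed

lemma fps_mass_X_power_add_X_power: "fps_mass (fps_X ^ u + fps_X ^ v) 2"
proof -
  have "(\<lambda>k. (if k = u then 1 else 0) + (if k = v then 1 else 0)) sums (1 + 1 :: real)"
    by (intro sums_add sums_single)
  then show ?thesis
    by (simp add: fps_mass_def)
qed

lemma fps_mass_remove_two_atoms:
  assumes p: "fps_mass p s" and uv: "u \<noteq> v"
    and \<beta>: "0 \<le> \<beta>" "\<beta> \<le> fps_nth p u" "\<beta> \<le> fps_nth p v"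
  shows "fps_mass (p - fps_const \<beta> * (fps_X ^ u + fps_X ^ v)) (s - 2 * \<beta>)"
proof -
  have "(\<lambda>k. fps_nth p k - \<beta> * fps_nth (fps_X ^ u + fps_X ^ v :: real fps) k) sums (s - \<beta> * 2)"
    by (intro sums_diff sums_mult fps_mass_sums[OF p] fps_mass_sums[OF fps_mass_X_power_add_X_power])
  moreover have "\<beta> * fps_nth (fps_X ^ u + fps_X ^ v :: real fps) k \<le> fps_nth p k" for k
    using uv \<beta> fps_mass_nonneg[OF p, of k] by auto
  ultimately show ?thesis
    by (simp add: fps_mass_def mult.commute)
qed

lemma fps_nth_X_power_add_X_power_power_le:
  assumes uv: "u \<noteq> v"
  shows "fps_nth ((fps_X ^ u + fps_X ^ v :: real fps) ^ m) j \<le> real (m choose (m div 2))"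
proof -
  define S where "S = {b \<in> {..m}. j = u * b + v * (m - b)}"
  have S_single: "S \<subseteq> {b}" if "b \<in> S" for b
  proof
    fix b'
    assume "b' \<in> S"
    with that have "int u * int b + int v * (int m - int b) = int u * int b' + int v * (int m - int b')"
      "b \<le> m" "b' \<le> m"
      unfolding S_def by (auto simp: of_nat_diff dest: arg_cong[of _ _ int])
    then have "(int u - int v) * (int b - int b') = 0"
      by (simp add: algebra_simps)
    then show "b' \<in> {b}"
      using uv by simp
  qed
  have "(fps_X ^ u + fps_X ^ v :: real fps) ^ m
      = (\<Sum>b\<le>m. fps_const (real (m choose b)) * fps_X ^ (u * b + v * (m - b)))"
    unfolding binomial_ring by (intro sum.cong refl) (simp add: fps_of_nat power_mult power_add mult.assoc)
  then have "fps_nth ((fps_X ^ u + fps_X ^ v :: real fps) ^ m) j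
      = (\<Sum>b\<le>m. if j = u * b + v * (m - b) then real (m choose b) else 0)"
    by (simp add: fps_sum_nth) (intro sum.cong refl, simp)
  also have "\<dots> = (\<Sum>b\<in>S. real (m choose b))"
    unfolding S_def by (rule sum.inter_filter[symmetric]) simp
  also have "\<dots> \<le> real (m choose (m div 2))"
  proof (cases "S = {}")
    case False
    then obtain b where "b \<in> S"
      by blast
    with S_single have "S = {b}"
      by blast
    then show ?thesis
      using binomial_maximum[of m b] by simp
  qed simp
  finally show ?thesis .
qed

lemma fps_mass_obtain_two_pos_nth:
  assumes p: "fps_mass p 1" and lt: "\<forall>k. fps_nth p k < 1"
  obtains u v where "u \<noteq> v" "0 < fps_nth p u" "0 < fps_nth p v"
proof -
  have "\<exists>u. 0 < fps_nth p u"
  proof (rule ccontr)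
    assume "\<nexists>u. 0 < fps_nth p u"
    then have "fps_nth p = (\<lambda>_. 0)"
      using fps_mass_nonneg[OF p] by (intro ext) (auto simp: not_less intro: order.antisym)
    then have "(\<lambda>_. 0 :: real) sums 1"
      using fps_mass_sums[OF p] by simp
    from sums_unique2[OF this sums_zero] show False
      by simp
  qed
  then obtain u where u: "0 < fps_nth p u" ..
  have "\<exists>v. v \<noteq> u \<and> 0 < fps_nth p v"
  proof (rule ccontr)
    assume "\<nexists>v. v \<noteq> u \<and> 0 < fps_nth p v"
    then have single: "fps_nth p = (\<lambda>k. if k = u then fps_nth p u else 0)"
      using fps_mass_nonneg[OF p] by (intro ext) (auto simp: not_less intro: order.antisym)
    have "(\<lambda>k. if k = u then fps_nth p u else 0) sums 1"
      using fps_mass_sums[OF p] by (subst (asm) single)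
    from sums_unique2[OF this sums_single] have "fps_nth p u = 1"
      by simp
    then show False
      using lt by (metis less_irrefl)
  qed
  with u that show ?thesis
    by blast
qed

lemma fps_mult_nth_le_bound_mult_mass:
  assumes B: "\<And>j. 0 \<le> fps_nth B j" "\<And>j. fps_nth B j \<le> c" and R: "fps_mass R s"
  shows "fps_nth (B * R) i \<le> c * s"
proof -
  have "fps_nth (B * R) i = (\<Sum>j\<le>i. fps_nth R j * fps_nth B (i - j))"
    by (simp add: mult.commute[of B R] fps_mult_nth atLeast0AtMost)
  also have "\<dots> \<le> (\<Sum>j\<le>i. fps_nth R j * c)"
    using B fps_mass_nonneg[OF R] by (intro sum_mono mult_left_mono) auto
  also have "\<dots> = c * (\<Sum>j\<le>i. fps_nth R j)"
    by (simp add: sum_distrib_left mult.commute)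
  also have "\<dots> \<le> c * s"
    using B(1)[of 0] B(2)[of 0] sum_le_sums_nonneg[OF fps_mass_sums[OF R], of "{..i}"] fps_mass_nonneg[OF R]
    by (intro mult_left_mono) auto
  finally show ?thesis .
qed

lemma fps_mass_power_nth_le_binomial_average:
  assumes p: "fps_mass p 1" and uv: "u \<noteq> v"
    and \<beta>: "0 \<le> \<beta>" "\<beta> \<le> fps_nth p u" "\<beta> \<le> fps_nth p v"
  shows "fps_nth (p ^ l) i \<le> (\<Sum>m\<le>l. real (l choose m) * (2 * \<beta>) ^ m * (1 - 2 * \<beta>) ^ (l - m)
    * (real (m choose (m div 2)) / 2 ^ m))"
proof -
  define B :: "real fps" where "B = fps_X ^ u + fps_X ^ v"
  define r where "r = p - fps_const \<beta> * B"
  have r: "fps_mass r (1 - 2 * \<beta>)"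
    unfolding r_def B_def by (rule fps_mass_remove_two_atoms[OF p uv \<beta>])
  have "p ^ l = (fps_const \<beta> * B + r) ^ l"
    by (simp add: r_def)
  also have "\<dots> = (\<Sum>m\<le>l. fps_const (real (l choose m) * \<beta> ^ m) * (B ^ m * r ^ (l - m)))"
    unfolding binomial_ring
    by (intro sum.cong refl) (simp add: fps_const_power power_mult_distrib mult_ac flip: fps_of_nat)
  finally have "fps_nth (p ^ l) i
      = (\<Sum>m\<le>l. real (l choose m) * \<beta> ^ m * fps_nth (B ^ m * r ^ (l - m)) i)"
    by (simp add: fps_sum_nth)
  also have "\<dots> \<le> (\<Sum>m\<le>l. real (l choose m) * \<beta> ^ m
      * (real (m choose (m div 2)) * (1 - 2 * \<beta>) ^ (l - m)))"
  proof (intro sum_mono mult_left_mono)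
    fix m
    show "fps_nth (B ^ m * r ^ (l - m)) i \<le> real (m choose (m div 2)) * (1 - 2 * \<beta>) ^ (l - m)"
      using fps_mass_nonneg[OF fps_mass_power[OF fps_mass_X_power_add_X_power]]
        fps_nth_X_power_add_X_power_power_le[OF uv]
      by (intro fps_mult_nth_le_bound_mult_mass[OF _ _ fps_mass_power[OF r]]) (simp_all add: B_def)
  qed (use \<beta> in simp)
  also have "\<dots> = (\<Sum>m\<le>l. real (l choose m) * (2 * \<beta>) ^ m * (1 - 2 * \<beta>) ^ (l - m)
      * (real (m choose (m div 2)) / 2 ^ m))"
    by (intro sum.cong refl) (simp add: power_mult_distrib)
  finally show ?thesis .
qed

lemma fps_mass_power_nth_eventually_le:
  assumes p: "fps_mass p 1" and lt: "\<forall>k. fps_nth p k < 1" and e: "0 < e"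
  shows "eventually (\<lambda>l. \<forall>i. fps_nth (p ^ l) i \<le> e) sequentially"
proof -
  obtain u v where uv: "u \<noteq> v" and pos: "0 < fps_nth p u" "0 < fps_nth p v"
    using fps_mass_obtain_two_pos_nth[OF p lt] by blast
  define \<beta> where "\<beta> = min (fps_nth p u) (fps_nth p v)"
  have \<beta>: "0 \<le> \<beta>" "\<beta> \<le> fps_nth p u" "\<beta> \<le> fps_nth p v"
    using pos by (simp_all add: \<beta>_def)
  have "fps_nth p u + fps_nth p v \<le> 1"
    using sum_le_sums_nonneg[OF fps_mass_sums[OF p], of "{u, v}"] uv fps_mass_nonneg[OF p] by simp
  then have "0 < 2 * \<beta>" "2 * \<beta> \<le> 1"
    using pos by (simp_all add: \<beta>_def)
  moreover have "real (m choose (m div 2)) / 2 ^ m \<le> 1" for m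
    using binomial_le_pow2[of m "m div 2"] by (simp flip: of_nat_power)
  ultimately have "(\<lambda>l. \<Sum>m\<le>l. real (l choose m) * (2 * \<beta>) ^ m * (1 - 2 * \<beta>) ^ (l - m)
      * (real (m choose (m div 2)) / 2 ^ m)) \<longlonglongrightarrow> 0"
    by (intro binomial_average_tendsto_zero central_binomial_div_power_tendsto_zero) simp_all
  from order_tendstoD(2)[OF this e]
  show ?thesis
    by (rule eventually_mono)
      (use fps_mass_power_nth_le_binomial_average[OF p uv \<beta>] in \<open>fastforce intro: order.trans\<close>)
qed

section \<open>Uniform decay of the iterates and Cesaro means\<close>

lemma piter_Suc_Suc_nth_le:
  assumes p: "fps_mass p 1" and i: "i \<noteq> 0" and e: "0 \<le> e"
    and K: "\<And>l. K \<le> l \<Longrightarrow> fps_nth (p ^ l) i \<le> e"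
  shows "fps_nth (piter p (Suc (Suc n))) i \<le> (\<Sum>l\<in>{1..<K}. fps_nth (piter p (Suc n)) l) + e"
proof -
  define c where "c l = fps_nth (piter p (Suc n)) l" for l
  have c: "0 \<le> c l" for l
    using fps_mass_nonneg[OF fps_mass_piter[OF p]] by (simp add: c_def)
  have "c l * fps_nth (p ^ l) i \<le> (if l \<in> {1..<K} then c l else 0) + e * c l" for l
  proof -
    consider "l = 0" | "l \<in> {1..<K}" | "K \<le> l"
      by fastforce
    then show ?thesis
    proof cases
      case 1
      then show ?thesis
        using i e c[of l] by simp
    next
      case 2
      have "fps_nth (p ^ l) i \<le> 1"
        using fps_mass_nth_le[OF fps_mass_power[OF p], of l i] by simp
      then have "c l * fps_nth (p ^ l) i \<le> c l"
        using c[of l] by (rule mult_left_le)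
      moreover have "0 \<le> e * c l"
        using e c[of l] by simp
      ultimately show ?thesis
        using 2 by simp
    next
      case 3
      then show ?thesis
        using mult_left_mono[OF K[OF 3] c[of l]] by (simp add: mult.commute)
    qed
  qed
  moreover have "(\<lambda>l. (if l \<in> {1..<K} then c l else 0) + e * c l)
      sums ((\<Sum>l\<in>{1..<K}. c l) + e * 1)"
    using fps_mass_sums[OF fps_mass_piter[OF p, of "Suc n"]]
    by (intro sums_add sums_If_finite_set sums_mult) (simp_all add: c_def[abs_def])
  ultimately show ?thesis
    using sums_le[OF _ sums_piter_Suc_Suc_nth[OF p]] by (fastforce simp: c_def)
qed

lemma piter_nth_eventually_le:
  assumes p: "fps_mass p 1" and lt: "\<forall>k. fps_nth p k < 1" and e: "0 < e"
  shows "eventually (\<lambda>n. \<forall>i. i \<noteq> 0 \<longrightarrow> fps_nth (piter p n) i \<le> e) sequentially"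
proof -
  obtain K where K: "\<And>l i. K \<le> l \<Longrightarrow> fps_nth (p ^ l) i \<le> e / 2"
    using fps_mass_power_nth_eventually_le[OF p lt, of "e / 2"] e
    by (auto simp: eventually_sequentially)
  have "(\<lambda>n. \<Sum>l\<in>{1..<K}. fps_nth (piter p (Suc n)) l) \<longlonglongrightarrow> 0"
    using piter_nth_tendsto_zero[OF p] lt by (intro tendsto_null_sum LIMSEQ_Suc) auto
  then have "eventually (\<lambda>n. (\<Sum>l\<in>{1..<K}. fps_nth (piter p (Suc n)) l) < e / 2) sequentially"
    using e by (intro order_tendstoD(2)[of _ 0]) simp_all
  then have "eventually (\<lambda>n. \<forall>i. i \<noteq> 0 \<longrightarrow> fps_nth (piter p (Suc (Suc n))) i \<le> e)
      sequentially"
  proof (rule eventually_mono)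
    fix n
    assume small: "(\<Sum>l\<in>{1..<K}. fps_nth (piter p (Suc n)) l) < e / 2"
    show "\<forall>i. i \<noteq> 0 \<longrightarrow> fps_nth (piter p (Suc (Suc n))) i \<le> e"
    proof (intro allI impI)
      fix i :: nat
      assume "i \<noteq> 0"
      from piter_Suc_Suc_nth_le[OF p this _ K] e
      have "fps_nth (piter p (Suc (Suc n))) i \<le> (\<Sum>l\<in>{1..<K}. fps_nth (piter p (Suc n)) l) + e / 2"
        by simp
      with small show "fps_nth (piter p (Suc (Suc n))) i \<le> e"
        by linarith
    qed
  qed
  then have "eventually (\<lambda>n. \<forall>i. i \<noteq> 0 \<longrightarrow> fps_nth (piter p (Suc n)) i \<le> e)
      sequentially"
    by (rule eventually_sequentially_Suc[THEN iffD1])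
  then show ?thesis
    by (rule eventually_sequentially_Suc[THEN iffD1])
qed

lemma cesaro_mean_le:
  fixes x :: "nat \<Rightarrow> real"
  assumes n: "0 < n" and le_1: "\<And>j. j \<in> {1..n} \<Longrightarrow> x j \<le> 1"
    and le_e: "\<And>j. J \<le> j \<Longrightarrow> x j \<le> e" and e: "0 \<le> e"
  shows "1 / real n * (\<Sum>j=1..n. x j) \<le> real J / real n + e"
proof -
  have "(\<Sum>j\<in>{1..n} \<inter> {..<J}. x j) \<le> real (card ({1..n} \<inter> {..<J})) * 1"
    using le_1 by (intro sum_bounded_above) auto
  also have "\<dots> \<le> real J"
    using card_mono[of "{..<J}" "{1..n} \<inter> {..<J}"] by simp
  finally have early: "(\<Sum>j\<in>{1..n} \<inter> {..<J}. x j) \<le> real J" .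
  have "(\<Sum>j\<in>{1..n} - {..<J}. x j) \<le> real (card ({1..n} - {..<J})) * e"
    using le_e by (intro sum_bounded_above) auto
  also have "\<dots> \<le> real n * e"
    using card_mono[of "{1..n}" "{1..n} - {..<J}"] e by (intro mult_right_mono) auto
  finally have late: "(\<Sum>j\<in>{1..n} - {..<J}. x j) \<le> real n * e" .
  have "(\<Sum>j=1..n. x j) \<le> real J + real n * e"
    using sum.Int_Diff[of "{1..n}" x "{..<J}"] early late by simp
  then show ?thesis
    using n by (simp add: field_simps)
qed

lemma cesaro_mean_mono:
  fixes x :: "nat \<Rightarrow> real"
  assumes n: "1 \<le> n" and le_next: "\<And>j. j \<in> {1..n} \<Longrightarrow> x j \<le> x (Suc n)"
  shows "1 / real n * (\<Sum>j=1..n. x j) \<le> 1 / real (Suc n) * (\<Sum>j=1..Suc n. x j)"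
proof -
  have "(\<Sum>j=1..n. x j) \<le> real n * x (Suc n)"
    using sum_bounded_above[of "{1..n}" x "x (Suc n)"] le_next by simp
  then have "(\<Sum>j=1..n. x j) * (real n + 1) \<le> ((\<Sum>j=1..n. x j) + x (Suc n)) * real n"
    by (simp add: algebra_simps)
  then show ?thesis
    using n by (simp add: sum.cl_ivl_Suc field_simps)
qed

lemma cesaro_mean_Sup_tendsto_zero:
  fixes x :: "nat \<Rightarrow> 'a \<Rightarrow> real"
  assumes I: "I \<noteq> {}"
    and bounds: "\<And>j i. 1 \<le> j \<Longrightarrow> i \<in> I \<Longrightarrow> 0 \<le> x j i \<and> x j i \<le> 1"
    and small: "\<And>e. 0 < e \<Longrightarrow> eventually (\<lambda>j. \<forall>i\<in>I. x j i \<le> e) sequentially"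
  shows "(\<lambda>n. SUP i\<in>I. 1 / real n * (\<Sum>j=1..n. x j i)) \<longlonglongrightarrow> 0"
proof -
  define m where "m n i = 1 / real n * (\<Sum>j=1..n. x j i)" for n i
  have m_bounds: "0 \<le> m n i \<and> m n i \<le> 1" if "i \<in> I" for n i
  proof -
    have "(\<Sum>j=1..n. x j i) \<le> real (card {1..n}) * 1"
      using bounds that by (intro sum_bounded_above) auto
    moreover have "0 \<le> (\<Sum>j=1..n. x j i)"
      using bounds that by (intro sum_nonneg) auto
    ultimately show ?thesis
      by (cases "n = 0") (simp_all add: m_def divide_le_eq_1)
  qed
  have bdd: "bdd_above (m n ` I)" for n
    using m_bounds by (intro bdd_aboveI[of _ 1]) auto
  have "(\<lambda>n. SUP i\<in>I. m n i) \<longlonglongrightarrow> 0"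
  proof (rule order_tendstoI)
    fix a :: real
    assume "a < 0"
    moreover obtain i0 where "i0 \<in> I"
      using I by blast
    ultimately have "a < (SUP i\<in>I. m n i)" for n
      using m_bounds[of i0 n] by (intro less_le_trans[OF _ cSUP_upper2[OF bdd \<open>i0 \<in> I\<close>]]) auto
    then show "eventually (\<lambda>n. a < (SUP i\<in>I. m n i)) sequentially"
      by simp
  next
    fix a :: real
    assume a: "0 < a"
    obtain J where J: "\<And>j i. J \<le> j \<Longrightarrow> i \<in> I \<Longrightarrow> x j i \<le> a / 3"
      using small[of "a / 3"] a by (auto simp: eventually_sequentially)
    have "(\<lambda>n. real J / real n) \<longlonglongrightarrow> 0"
      by (rule lim_const_over_n)
    then have "eventually (\<lambda>n. real J / real n < a / 3) sequentially"
      using a by (intro order_tendstoD(2)[of _ 0]) simp_all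
    then show "eventually (\<lambda>n. (SUP i\<in>I. m n i) < a) sequentially"
      using eventually_gt_at_top[of 0]
    proof eventually_elim
      case (elim n)
      have "(SUP i\<in>I. m n i) \<le> real J / real n + a / 3"
        unfolding m_def using I bounds J elim(2) a by (intro cSUP_least cesaro_mean_le) auto
      then show ?case
        using elim(1) a by linarith
    qed
  qed
  then show ?thesis
    by (simp add: m_def)
qed

theorem corollary1:
  fixes p :: "real fps"
  assumes coeff_bounds: "\<forall>k. 0 \<le> fps_nth p k \<and> fps_nth p k < 1"
    and sum_one: "(\<lambda>k. fps_nth p k) sums 1"
  shows "(\<forall>n\<ge>1. qcoeff p n 0 \<le> qcoeff p (Suc n) 0) \<and>
         ((\<lambda>n. SUP i\<in>{1..}. qcoeff p n i) \<longlonglongrightarrow> 0)"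
proof
  have p: "fps_mass p 1"
    using assms by (simp add: fps_mass_def)
  have lt: "\<forall>k. fps_nth p k < 1"
    using coeff_bounds by blast
  show "\<forall>n\<ge>1. qcoeff p n 0 \<le> qcoeff p (Suc n) 0"
  proof (intro allI impI)
    fix n :: nat
    assume "1 \<le> n"
    then show "qcoeff p n 0 \<le> qcoeff p (Suc n) 0"
      unfolding qcoeff_def by (rule cesaro_mean_mono) (simp add: piter_nth_0_mono[OF p])
  qed
  have "(\<lambda>n. SUP i\<in>{1..}. 1 / real n * (\<Sum>j=1..n. fps_nth (piter p j) i)) \<longlonglongrightarrow> 0"
  proof (rule cesaro_mean_Sup_tendsto_zero)
    show "0 \<le> fps_nth (piter p j) i \<and> fps_nth (piter p j) i \<le> 1" if "1 \<le> j" for j i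
      using that fps_mass_nonneg[OF fps_mass_piter[OF p]] fps_mass_nth_le[OF fps_mass_piter[OF p]]
      by simp
    show "eventually (\<lambda>j. \<forall>i\<in>{1..}. fps_nth (piter p j) i \<le> e) sequentially" if "0 < e" for e
      using piter_nth_eventually_le[OF p lt that] by (rule eventually_mono) auto
  qed simp
  then show "(\<lambda>n. SUP i\<in>{1..}. qcoeff p n i) \<longlonglongrightarrow> 0"
    by (simp add: qcoeff_def)
qed

end
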